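(* Let $A$ be a nontrivial commutative group and $R$ a nonzero commutative ring. (a) If $A$ has an element of infinite order, then the augmentation ideal of $R[A]$ is not nilpotent. (b) The augmentation ideal of $\mathbb{Z}[A]$ is not nilpotent. (c) Let $m,N\ge2$. If there is a prime $p$ with $p\mid N$ and $p\nmid m$, and $A$ has an element of order $m$, then $\nu((\mathbb{Z}/N\mathbb{Z})[A])=\infty$. (d) If $A$ is finite, then $\nu(R[A])\ge\max(\exp(A),\operatorname{rank}(A))$.
   Context: For a commutative ring $R$ and commutative group $A$, the augmentation ideal $I$ of the group ring $R[A]$ is the kernel of $\sum r_a[a]\mapsto\sum r_a$; $\nu(R[A])$ is the least $n\in\mathbb N$ with $I^n=0$, or $\infty$ if none exists. For a finite commutative group $A$, $\exp(A)$ is its exponent and $\operatorname{rank}(A)$ is the least $n$ such that $A$ is a direct sum of $n$ cyclic groups. *)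

theory Defs
  imports "HOL-Library.Poly_Mapping" "HOL-Library.Extended_Nat"
    "HOL-Computational_Algebra.Primes" "Berlekamp_Zassenhaus.Finite_Field"
begin

text \<open>Commutative groups A are types of class ab_group_add (written additively).
 The group ring R[A] is the type poly_mapping from a to r of finitely supported functions
 A to R with the convolution product of HOL-Library.Poly_Mapping.\<close>

definition augmentation :: "('a \<Rightarrow>\<^sub>0 'r::comm_ring_1) \<Rightarrow> 'r" where
  "augmentation f = (\<Sum>a\<in>Poly_Mapping.keys f. Poly_Mapping.lookup f a)"

definition aug_ideal :: "('a::ab_group_add \<Rightarrow>\<^sub>0 'r::comm_ring_1) set" where
  "aug_ideal = {f. augmentation f = 0}"

definition ideal_pow :: "'b::comm_ring_1 set \<Rightarrow> nat \<Rightarrow> 'b set" where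
  "ideal_pow I n = (if n = 0 then UNIV else
     {sum_list (map prod_list xss) | xss. \<forall>xs\<in>set xss. length xs = n \<and> set xs \<subseteq> I})"

definition nilpotent_ideal :: "'b::comm_ring_1 set \<Rightarrow> bool" where
  "nilpotent_ideal I \<longleftrightarrow> (\<exists>n. ideal_pow I n = {0})"

definition nil_index :: "'b::comm_ring_1 set \<Rightarrow> enat" where
  "nil_index I = (if nilpotent_ideal I then enat (LEAST n. ideal_pow I n = {0}) else \<infinity>)"

primrec gmul :: "nat \<Rightarrow> 'a::ab_group_add \<Rightarrow> 'a" where
  "gmul 0 a = 0"
| "gmul (Suc k) a = a + gmul k a"

text \<open>order of an element; 0 encodes infinite order\<close>
definition elem_ord :: "'a::ab_group_add \<Rightarrow> nat" where
  "elem_ord a = (if \<exists>k>0. gmul k a = 0 then (LEAST k. k > 0 \<and> gmul k a = 0) else 0)"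

definition infinite_order :: "'a::ab_group_add \<Rightarrow> bool" where
  "infinite_order a \<longleftrightarrow> (\<forall>k>0. gmul k a \<noteq> 0)"

definition grp_exp :: "'a::ab_group_add itself \<Rightarrow> nat" where
  "grp_exp _ = (LEAST e. e > 0 \<and> (\<forall>a::'a. gmul e a = 0))"

text \<open>cyclic subgroup generated by g (for finite groups, nonnegative multiples suffice)\<close>
definition cyc :: "'a::ab_group_add \<Rightarrow> 'a set" where
  "cyc g = {gmul k g | k. True} \<union> {- gmul k g | k. True}"

definition direct_sum_cyclic :: "'a::ab_group_add itself \<Rightarrow> nat \<Rightarrow> bool" where
  "direct_sum_cyclic _ n \<longleftrightarrow> (\<exists>g :: nat \<Rightarrow> 'a.
      bij_betw (\<lambda>x. \<Sum>i<n. x i) (PiE {..<n} (\<lambda>i. cyc (g i))) (UNIV :: 'a set))"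

definition grp_rank :: "'a::ab_group_add itself \<Rightarrow> nat" where
  "grp_rank T = (LEAST n. direct_sum_cyclic T n)"

end

theory Submission
  imports Defs
begin

text \<open>Write \<open>[a]\<close> for the basis element of \<open>a\<close> in \<open>R[A]\<close>, so that \<open>[a] - 1\<close> lies in the
  augmentation ideal.  If \<open>\<Sum>i<n. g i\<close> arises as a subset sum of the \<open>g i\<close> in only one
  way, then \<open>[\<Sum>i<n. g i]\<close> occurs with coefficient 1 in \<open>\<Prod>i<n. ([g i] - 1)\<close>, which is
  therefore nonzero.  Taking all \<open>g i\<close> equal to an element of infinite order gives (a), and
  to an element of maximal order gives \<open>\<nu> \<ge> exp A\<close>; taking the generators of a
  decomposition of \<open>A\<close> into nonzero cyclic groups gives \<open>\<nu> \<ge> rank A\<close>.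

  For \<open>a \<noteq> 0\<close> of finite order \<open>c\<close>, let \<open>s\<close> be the sum of the elements of the cyclic group
  generated by \<open>a\<close>.  Then \<open>s\<^sup>2 = c s\<close>, so \<open>x = c - s\<close> lies in the augmentation ideal and
  \<open>x ^ (n + 1) = c ^ n x\<close> has coefficient \<open>- c ^ n\<close> at \<open>a\<close>.  This is nonzero over \<open>\<int>\<close>,
  and over \<open>\<int>/N\<close> when some prime divisor of \<open>N\<close> does not divide \<open>c\<close>; together with (a)
  this gives (b) and (c).\<close>

lemma gmul_add: "gmul (m + n) a = gmul m a + gmul n a"
  by (induction m) (auto simp: add.assoc)

lemma gmul_mult: "gmul (m * n) a = gmul m (gmul n a)"
  by (induction m) (auto simp: gmul_add)

lemma gmul_zero [simp]: "gmul n 0 = 0"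
  by (induction n) auto

lemma gmul_plus_distrib: "gmul n (a + b) = gmul n a + gmul n b"
  by (induction n) (auto simp: algebra_simps)

lemma gmul_minus: "gmul n (- a) = - gmul n a"
  by (induction n) (auto simp: algebra_simps)

lemma gmul_diff_distrib: "gmul n (a - b) = gmul n a - gmul n b"
  using gmul_plus_distrib[of n a "- b"] gmul_minus[of n b] by simp

lemma gmul_commute: "gmul m (gmul n a) = gmul n (gmul m a)"
  by (metis gmul_mult mult.commute)

lemma gmul_diff: "m \<le> n \<Longrightarrow> gmul n a - gmul m a = gmul (n - m) a"
  using gmul_add[of "n - m" m a] by simp

lemma sum_constant_gmul: "(\<Sum>i\<in>S. a) = gmul (card S) a"
  by (induction S rule: infinite_finite_induct) auto

lemma gmul_mod:
  assumes "gmul k a = 0"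
  shows "gmul n a = gmul (n mod k) a"
proof -
  have "gmul n a = gmul (n mod k) a + gmul (k * (n div k)) a"
    by (metis gmul_add mod_mult_div_eq)
  also have "gmul (k * (n div k)) a = 0"
    by (simp add: mult.commute[of k] gmul_mult assms)
  finally show ?thesis by simp
qed

lemma infinite_order_gmul_inj:
  assumes "infinite_order a"
  shows "inj (\<lambda>k. gmul k a)"
proof (rule injI)
  have "\<not> (i < j \<and> gmul i a = gmul j a)" for i j
    using assms gmul_diff[of i j a] unfolding infinite_order_def by fastforce
  then show "gmul i a = gmul j a \<Longrightarrow> i = j" for i j
    by (metis linorder_neqE_nat)
qed

lemma ex_gmul_eq_zero_finite:
  assumes "finite (UNIV :: 'a::ab_group_add set)"
  shows "\<exists>k>0. gmul k (a::'a) = 0"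
proof -
  have "\<not> inj (\<lambda>k::nat. gmul k a)"
    using assms finite_imageD infinite_UNIV_nat by (metis finite_subset subset_UNIV)
  then obtain i j where "i < j" "gmul i a = gmul j a"
    unfolding inj_def by (metis linorder_neqE_nat)
  then show ?thesis
    using gmul_diff[of i j a] by (intro exI[of _ "j - i"]) auto
qed

lemma
  assumes "\<exists>k>0. gmul k a = 0"
  shows elem_ord_pos: "elem_ord a > 0"
    and gmul_eq_zero_iff_elem_ord_dvd: "gmul n a = 0 \<longleftrightarrow> elem_ord a dvd n"
proof -
  have ord: "elem_ord a = (LEAST k. k > 0 \<and> gmul k a = 0)"
    using assms by (simp add: elem_ord_def)
  have least: "elem_ord a > 0 \<and> gmul (elem_ord a) a = 0"
    unfolding ord using assms by (rule LeastI_ex)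
  then show "elem_ord a > 0" by simp
  have "gmul j a \<noteq> 0" if "0 < j" "j < elem_ord a" for j
    using that not_less_Least[of j "\<lambda>k. k > 0 \<and> gmul k a = 0"] unfolding ord by auto
  then have "gmul n a = 0 \<Longrightarrow> n mod elem_ord a = 0"
    using gmul_mod[of "elem_ord a" a n] least by (metis mod_less_divisor neq0_conv)
  moreover have "gmul (elem_ord a * j) a = 0" for j
    using least by (simp add: mult.commute[of _ j] gmul_mult)
  ultimately show "gmul n a = 0 \<longleftrightarrow> elem_ord a dvd n"
    by (auto simp: dvd_eq_mod_eq_0[symmetric] elim!: dvdE)
qed

lemma elem_ord_eqI:
  assumes "d > 0" "\<And>n. gmul n a = 0 \<longleftrightarrow> d dvd n"
  shows "elem_ord a = d"
proof -
  have ex: "\<exists>k>0. gmul k a = 0" using assms by auto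
  have "elem_ord a dvd d"
    using assms(2)[of d] gmul_eq_zero_iff_elem_ord_dvd[OF ex, of d] by simp
  moreover have "d dvd elem_ord a"
    using assms(2)[of "elem_ord a"] gmul_eq_zero_iff_elem_ord_dvd[OF ex, of "elem_ord a"] by simp
  ultimately show ?thesis by (rule dvd_antisym)
qed

lemma elem_ord_eq_1_iff: "elem_ord a = 1 \<longleftrightarrow> a = 0"
proof
  assume ord: "elem_ord a = 1"
  then have "\<exists>k>0. gmul k a = 0" by (metis elem_ord_def zero_neq_one)
  then show "a = 0" using gmul_eq_zero_iff_elem_ord_dvd[of a 1] ord by simp
next
  assume "a = 0"
  then show "elem_ord a = 1" by (intro elem_ord_eqI) auto
qed

lemma gmul_inj_on_below_elem_ord:
  assumes "\<exists>k>0. gmul k a = 0"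
  shows "inj_on (\<lambda>k. gmul k a) {..<elem_ord a}"
proof -
  have "gmul i a \<noteq> gmul j a" if "i < j" "j < elem_ord a" for i j
  proof
    assume "gmul i a = gmul j a"
    then have "elem_ord a dvd j - i"
      using gmul_diff[of i j a] gmul_eq_zero_iff_elem_ord_dvd[OF assms] that by simp
    moreover have "0 < j - i" "j - i < elem_ord a" using that by auto
    ultimately show False by (simp add: nat_dvd_not_less)
  qed
  then show ?thesis
    unfolding inj_on_def by (metis lessThan_iff linorder_neqE_nat)
qed

lemma elem_ord_gmul:
  assumes "\<exists>k>0. gmul k a = 0" and "d dvd elem_ord a"
  shows "elem_ord (gmul d a) = elem_ord a div d"
proof -
  obtain e where e: "elem_ord a = d * e" using assms(2) by auto
  then have "d > 0" "e > 0" using elem_ord_pos[OF assms(1)] by auto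
  have "gmul n (gmul d a) = 0 \<longleftrightarrow> e dvd n" for n
    using gmul_eq_zero_iff_elem_ord_dvd[OF assms(1), of "d * n"] e \<open>d > 0\<close>
    by (simp add: gmul_mult[symmetric] mult.commute)
  then show ?thesis using e \<open>d > 0\<close> \<open>e > 0\<close> by (intro elem_ord_eqI) auto
qed

section \<open>Subgroups of a finite commutative group\<close>

text \<open>In a finite group every additively closed set containing 0 is a subgroup, so
  closure under addition is all we require.\<close>

definition add_submonoid :: "'a::ab_group_add set \<Rightarrow> bool" where
  "add_submonoid H \<longleftrightarrow> 0 \<in> H \<and> (\<forall>x\<in>H. \<forall>y\<in>H. x + y \<in> H)"

definition multiples :: "'a::ab_group_add \<Rightarrow> 'a set" where
  "multiples a = range (\<lambda>k. gmul k a)"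

definition adjoin :: "'a::ab_group_add set \<Rightarrow> 'a \<Rightarrow> 'a set" where
  "adjoin K a = {gmul j a + k | j k. k \<in> K}"

lemma add_submonoid_gmul: "add_submonoid H \<Longrightarrow> x \<in> H \<Longrightarrow> gmul n x \<in> H"
  by (induction n) (auto simp: add_submonoid_def)

lemma add_submonoid_sum: "add_submonoid H \<Longrightarrow> (\<And>i. i \<in> A \<Longrightarrow> f i \<in> H) \<Longrightarrow> sum f A \<in> H"
  by (induction A rule: infinite_finite_induct) (auto simp: add_submonoid_def)

lemma uminus_gmul_pred_elem_ord:
  assumes "\<exists>k>0. gmul k a = 0"
  shows "- a = gmul (elem_ord a - 1) a"
proof -
  have "gmul (elem_ord a - 1) a + a = gmul (elem_ord a) a"
    using elem_ord_pos[OF assms] gmul_add[of "elem_ord a - 1" 1 a] by simp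
  also have "\<dots> = 0" using gmul_eq_zero_iff_elem_ord_dvd[OF assms] by simp
  finally show ?thesis by (simp add: neg_eq_iff_add_eq_0 add.commute)
qed

lemma add_submonoid_uminus:
  assumes "finite (UNIV :: 'a::ab_group_add set)" "add_submonoid H" "(x::'a) \<in> H"
  shows "- x \<in> H"
  using uminus_gmul_pred_elem_ord[OF ex_gmul_eq_zero_finite[OF assms(1)]]
    add_submonoid_gmul[OF assms(2,3)] by metis

lemma add_submonoid_diff:
  assumes "finite (UNIV :: 'a::ab_group_add set)" "add_submonoid H" "(x::'a) \<in> H" "y \<in> H"
  shows "x - y \<in> H"
  using add_submonoid_uminus[OF assms(1,2,4)] assms(2,3)
  unfolding add_submonoid_def diff_conv_add_uminus by blast

lemma gmul_mem_multiples [simp]: "gmul k a \<in> multiples a"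
  unfolding multiples_def by blast

lemma mem_multiples_self [simp]: "a \<in> multiples a"
  using gmul_mem_multiples[of 1 a] by simp

lemma zero_mem_multiples [simp]: "0 \<in> multiples a"
  using gmul_mem_multiples[of 0 a] by simp

lemma add_submonoid_multiples: "add_submonoid (multiples a)"
  unfolding add_submonoid_def
proof (intro conjI ballI)
  fix x y assume "x \<in> multiples a" "y \<in> multiples a"
  then obtain i j where "x = gmul i a" "y = gmul j a" unfolding multiples_def by blast
  then show "x + y \<in> multiples a" using gmul_mem_multiples[of "i + j" a] by (simp add: gmul_add)
qed simp

lemma multiples_subset: "add_submonoid H \<Longrightarrow> a \<in> H \<Longrightarrow> multiples a \<subseteq> H"
  unfolding multiples_def using add_submonoid_gmul by blast

lemma multiples_eq_image_below_elem_ord: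
  assumes "\<exists>k>0. gmul k a = 0"
  shows "multiples a = (\<lambda>k. gmul k a) ` {..<elem_ord a}"
proof
  show "multiples a \<subseteq> (\<lambda>k. gmul k a) ` {..<elem_ord a}"
  proof
    fix x assume "x \<in> multiples a"
    then obtain k where "x = gmul k a" unfolding multiples_def by blast
    then have "x = gmul (k mod elem_ord a) a"
      using gmul_mod[of "elem_ord a" a k] gmul_eq_zero_iff_elem_ord_dvd[OF assms] by simp
    moreover have "k mod elem_ord a < elem_ord a" using elem_ord_pos[OF assms] by simp
    ultimately show "x \<in> (\<lambda>k. gmul k a) ` {..<elem_ord a}" by blast
  qed
qed (auto simp: multiples_def)

lemma card_multiples:
  assumes "\<exists>k>0. gmul k a = 0"
  shows "card (multiples a) = elem_ord a"
  using gmul_inj_on_below_elem_ord[OF assms]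
  by (simp add: multiples_eq_image_below_elem_ord[OF assms] card_image)

lemma finite_multiples: "\<exists>k>0. gmul k a = 0 \<Longrightarrow> finite (multiples a)"
  by (simp add: multiples_eq_image_below_elem_ord)

lemma cyc_eq_multiples:
  assumes "finite (UNIV :: 'a::ab_group_add set)"
  shows "cyc (g::'a) = multiples g"
  using add_submonoid_uminus[OF assms add_submonoid_multiples gmul_mem_multiples]
  unfolding cyc_def by (auto simp: multiples_def)

lemma mem_adjoinI: "k \<in> K \<Longrightarrow> gmul j a + k \<in> adjoin K a"
  unfolding adjoin_def by blast

lemma add_submonoid_adjoin:
  assumes "add_submonoid K"
  shows "add_submonoid (adjoin K a)"
  unfolding add_submonoid_def
proof (intro conjI ballI)
  show "0 \<in> adjoin K a"
    using mem_adjoinI[of 0 K 0 a] assms by (simp add: add_submonoid_def)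
  fix x y assume "x \<in> adjoin K a" "y \<in> adjoin K a"
  then obtain i j k l where "x = gmul i a + k" "y = gmul j a + l" "k \<in> K" "l \<in> K"
    unfolding adjoin_def by blast
  then show "x + y \<in> adjoin K a"
    using mem_adjoinI[of "k + l" K "i + j" a] assms
    by (simp add: add_submonoid_def gmul_add algebra_simps)
qed

lemma subset_adjoin: "K \<subseteq> adjoin K a"
  using mem_adjoinI[of _ K 0 a] by auto

lemma mem_adjoin_gmul: "0 \<in> K \<Longrightarrow> gmul j a \<in> adjoin K a"
  using mem_adjoinI[of 0 K j a] by simp

lemma adjoin_subset:
  assumes "add_submonoid H" "K \<subseteq> H" "a \<in> H"
  shows "adjoin K a \<subseteq> H"
proof
  fix x assume "x \<in> adjoin K a"
  then obtain j k where "x = gmul j a + k" "k \<in> K" unfolding adjoin_def by blast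
  then show "x \<in> H"
    using assms add_submonoid_gmul[OF assms(1,3), of j] by (auto simp: add_submonoid_def)
qed

lemma finite_ex_max_nat:
  assumes "finite A" "a \<in> A"
  shows "\<exists>x\<in>A. \<forall>y\<in>A. (f y :: nat) \<le> f x"
  using ex_has_greatest_nat[of "\<lambda>x. x \<in> A" a f "Suc (Max (f ` A))"] assms
  by (auto intro!: le_imp_less_Suc Max_ge)

lemma elem_ord_add_coprime:
  assumes fin: "finite (UNIV :: 'a::ab_group_add set)"
    and cop: "coprime (elem_ord (x::'a)) (elem_ord y)"
  shows "elem_ord (x + y) = elem_ord x * elem_ord y"
proof (rule elem_ord_eqI)
  note ord_dvd = gmul_eq_zero_iff_elem_ord_dvd[OF ex_gmul_eq_zero_finite[OF fin]]
  show "elem_ord x * elem_ord y > 0"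
    using elem_ord_pos[OF ex_gmul_eq_zero_finite[OF fin]] by simp
  fix n
  show "gmul n (x + y) = 0 \<longleftrightarrow> elem_ord x * elem_ord y dvd n"
  proof
    assume "gmul n (x + y) = 0"
    then have y: "gmul n y = - gmul n x"
      by (simp add: gmul_plus_distrib eq_neg_iff_add_eq_0 add.commute)
    have "gmul (elem_ord x) x = 0" "gmul (elem_ord y) y = 0"
      using ord_dvd[where a=x] ord_dvd[where a=y] by simp_all
    then have "gmul (elem_ord x) (gmul n x) = 0" "gmul (elem_ord y) (gmul n x) = 0"
      using gmul_commute[of _ n] y by (metis gmul_zero, metis gmul_minus gmul_zero neg_0_equal_iff_equal)
    then have "elem_ord (gmul n x) dvd elem_ord x" "elem_ord (gmul n x) dvd elem_ord y"
      using ord_dvd[where a="gmul n x"] by simp_all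
    then have "gmul n x = 0"
      using cop elem_ord_eq_1_iff by (metis coprime_common_divisor_nat)
    moreover from this have "gmul n y = 0" using y by simp
    ultimately have "elem_ord x dvd n" "elem_ord y dvd n" using ord_dvd by auto
    then show "elem_ord x * elem_ord y dvd n" using cop by (simp add: divides_mult)
  next
    assume "elem_ord x * elem_ord y dvd n"
    then have "gmul n x = 0" "gmul n y = 0" using ord_dvd dvd_mult_left dvd_mult_right by blast+
    then show "gmul n (x + y) = 0" by (simp add: gmul_plus_distrib)
  qed
qed

text \<open>Otherwise some prime \<open>q\<close> divides \<open>elem_ord x\<close> to a higher power than \<open>elem_ord g\<close>;
  adding the \<open>q\<close>-primary part of \<open>x\<close> to the part of \<open>g\<close> prime to \<open>q\<close> then gives an element
  of larger order.\<close>

lemma elem_ord_dvd_max_elem_ord: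
  assumes fin: "finite (UNIV :: 'a::ab_group_add set)" and H: "add_submonoid H"
    and g: "(g::'a) \<in> H" and max: "\<And>y. y \<in> H \<Longrightarrow> elem_ord y \<le> elem_ord g" and x: "x \<in> H"
  shows "elem_ord x dvd elem_ord g"
proof (rule ccontr)
  note ex = ex_gmul_eq_zero_finite[OF fin]
  assume "\<not> elem_ord x dvd elem_ord g"
  define a where "a = elem_ord x"
  define m where "m = elem_ord g"
  have "a > 0" "m > 0" using elem_ord_pos[OF ex] unfolding a_def m_def by auto
  then obtain q where q: "prime q" "multiplicity q m < multiplicity q a"
    using multiplicity_le_imp_dvd \<open>\<not> elem_ord x dvd elem_ord g\<close> unfolding a_def m_def
    by (metis not_le not_gr0)
  define e where "e = multiplicity q a"
  define f where "f = multiplicity q m"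
  obtain r where r: "a = q ^ e * r" unfolding e_def by (rule dvdE[OF multiplicity_dvd])
  obtain s where s: "m = q ^ f * s" unfolding f_def by (rule dvdE[OF multiplicity_dvd])
  have "r > 0" "s > 0" using r s \<open>a > 0\<close> \<open>m > 0\<close> by auto
  have "\<not> q dvd m div q ^ f"
    unfolding f_def using \<open>m > 0\<close> q(1) by (intro multiplicity_decompose) (auto simp: prime_nat_iff)
  moreover have "m div q ^ f = s" using s q(1) by (simp add: prime_gt_0_nat)
  ultimately have "\<not> q dvd s" by simp
  have "elem_ord (gmul r x) = q ^ e"
    using elem_ord_gmul[OF ex, of r x] r \<open>r > 0\<close> unfolding a_def[symmetric] by simp
  moreover have "elem_ord (gmul (q ^ f) g) = s"
    using elem_ord_gmul[OF ex, of "q ^ f" g] s q(1) unfolding m_def[symmetric] by simp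
  moreover have "coprime (q ^ e) s"
    using \<open>\<not> q dvd s\<close> q(1) by (simp add: prime_imp_coprime_nat)
  ultimately have "elem_ord (gmul r x + gmul (q ^ f) g) = q ^ e * s"
    using elem_ord_add_coprime[OF fin] by simp
  moreover have "gmul r x + gmul (q ^ f) g \<in> H"
    using H x g add_submonoid_gmul unfolding add_submonoid_def by blast
  ultimately have "q ^ e * s \<le> q ^ f * s" using max s unfolding m_def by metis
  moreover have "q ^ f < q ^ e" using q prime_gt_1_nat unfolding e_def f_def by simp
  ultimately show False using \<open>s > 0\<close> by simp
qed

lemma prime_dvd_elem_ord_if_multiple_mem:
  assumes fin: "finite (UNIV :: 'a::ab_group_add set)" and S: "add_submonoid S"
    and x: "(x::'a) \<notin> S" and q: "prime q" "gmul q x \<in> S"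
  shows "q dvd elem_ord x"
proof (rule ccontr)
  note ex = ex_gmul_eq_zero_finite[OF fin]
  assume "\<not> q dvd elem_ord x"
  then have "gcd q (elem_ord x) = 1"
    using q(1) by (simp add: prime_imp_coprime_nat)
  moreover obtain u v where "q * u = elem_ord x * v + gcd q (elem_ord x)"
    using bezout_nat q(1) by (metis not_prime_0)
  ultimately have "gmul u (gmul q x) = gmul (elem_ord x * v) x + x"
    by (simp add: gmul_mult[symmetric] mult.commute[of u] gmul_add)
  also have "gmul (elem_ord x * v) x = 0"
    using gmul_eq_zero_iff_elem_ord_dvd[OF ex] by simp
  finally have "x = gmul u (gmul q x)" by simp
  then show False using add_submonoid_gmul[OF S q(2)] x by metis
qed

lemma ex_prime_multiple_mem:
  assumes fin: "finite (UNIV :: 'a::ab_group_add set)"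
    and S: "add_submonoid S" and h: "(h::'a) \<notin> S"
  shows "\<exists>j q. prime q \<and> gmul j h \<notin> S \<and> gmul q (gmul j h) \<in> S"
proof -
  note ex = ex_gmul_eq_zero_finite[OF fin]
  have "gmul (elem_ord h) h = 0" using gmul_eq_zero_iff_elem_ord_dvd[OF ex] by simp
  then have "\<exists>t>0. gmul t h \<in> S"
    using elem_ord_pos[OF ex, of h] S by (intro exI[of _ "elem_ord h"]) (simp add: add_submonoid_def)
  define t where "t = (LEAST t. t > 0 \<and> gmul t h \<in> S)"
  have t: "t > 0" "gmul t h \<in> S"
    using LeastI_ex[OF \<open>\<exists>t>0. gmul t h \<in> S\<close>] unfolding t_def by auto
  have below: "gmul j h \<notin> S" if "0 < j" "j < t" for j
    using not_less_Least[of j "\<lambda>t. t > 0 \<and> gmul t h \<in> S"] that unfolding t_def by auto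
  have "t \<noteq> 1" using t h by auto
  then obtain q where q: "prime q" "q dvd t" using prime_factor_nat by blast
  then have "0 < t div q" "t div q < t"
    using t(1) prime_gt_1_nat by (auto simp: dvd_div_eq_0_iff intro: div_less_dividend)
  moreover have "gmul q (gmul (t div q) h) = gmul t h"
    using gmul_mult[of q "t div q" h] dvd_mult_div_cancel[OF q(2)] by (simp only:)
  ultimately have "prime q \<and> gmul (t div q) h \<notin> S \<and> gmul q (gmul (t div q) h) \<in> S"
    using q(1) t(2) below by simp
  then show ?thesis by blast
qed

section \<open>Decomposition into cyclic subgroups\<close>

text \<open>A cyclic subgroup \<open>multiples g\<close> of maximal order in \<open>H\<close> is a direct summand: take \<open>K\<close>
  maximal among the subgroups of \<open>H\<close> meeting it trivially.  If \<open>adjoin K g \<noteq> H\<close>, some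
  \<open>h \<notin> adjoin K g\<close> has a prime multiple \<open>q h\<close> in it; correcting \<open>h\<close> by a multiple of \<open>g\<close>
  achieves \<open>q h \<in> K\<close>, and then \<open>adjoin K h\<close> still meets \<open>multiples g\<close> trivially.\<close>

lemma ex_prime_multiple_mem_complement:
  assumes fin: "finite (UNIV :: 'a::ab_group_add set)" and H: "add_submonoid H"
    and g: "(g::'a) \<in> H" and max: "\<And>x. x \<in> H \<Longrightarrow> elem_ord x \<le> elem_ord g"
    and K: "add_submonoid K" "K \<inter> multiples g = {0}"
    and h: "h \<in> H" "h \<notin> adjoin K g" and q: "prime q" "gmul q h \<in> adjoin K g"
  shows "\<exists>h'\<in>H. h' \<notin> adjoin K g \<and> gmul q h' \<in> K"
proof -
  note ex = ex_gmul_eq_zero_finite[OF fin]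
  define m where "m = elem_ord g"
  have S: "add_submonoid (adjoin K g)" using K(1) by (rule add_submonoid_adjoin)
  have "elem_ord h dvd m"
    unfolding m_def using elem_ord_dvd_max_elem_ord[OF fin H g max h(1)] .
  then have "q dvd m"
    using prime_dvd_elem_ord_if_multiple_mem[OF fin S h(2) q] dvd_trans by blast
  then obtain m' where m': "m = q * m'" by blast
  from q(2) obtain s k where sk: "gmul q h = gmul s g + k" "k \<in> K"
    unfolding adjoin_def by blast
  have "gmul m' (gmul q h) = 0"
    using \<open>elem_ord h dvd m\<close> gmul_eq_zero_iff_elem_ord_dvd[OF ex] m'
    by (simp add: gmul_mult[symmetric] mult.commute)
  then have "gmul (m' * s) g = - gmul m' k"
    using sk by (simp add: gmul_plus_distrib gmul_mult eq_neg_iff_add_eq_0)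
  moreover have "- gmul m' k \<in> K"
    using add_submonoid_uminus[OF fin K(1) add_submonoid_gmul[OF K(1) sk(2)]] .
  ultimately have "gmul (m' * s) g \<in> K \<inter> multiples g" by (metis IntI gmul_mem_multiples)
  then have "m dvd m' * s"
    using K(2) gmul_eq_zero_iff_elem_ord_dvd[OF ex] unfolding m_def by simp
  moreover have "m' > 0" using m' elem_ord_pos[OF ex, of g] unfolding m_def by simp
  ultimately have "q dvd s" using m' by (simp add: mult.commute[of q])
  then obtain s' where s': "s = q * s'" by blast
  define h' where "h' = h - gmul s' g"
  have "h' \<in> H"
    unfolding h'_def using add_submonoid_diff[OF fin H h(1) add_submonoid_gmul[OF H g]] .
  moreover have "gmul q h' = k"
    unfolding h'_def gmul_diff_distrib using sk s' by (simp add: gmul_mult)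
  moreover have "h' \<notin> adjoin K g"
  proof
    assume "h' \<in> adjoin K g"
    moreover have "gmul s' g \<in> adjoin K g"
      using K(1) mem_adjoin_gmul[of K s' g] by (simp add: add_submonoid_def)
    ultimately have "h' + gmul s' g \<in> adjoin K g"
      using S by (simp add: add_submonoid_def)
    then show False using h(2) unfolding h'_def by simp
  qed
  ultimately show ?thesis using sk(2) by blast
qed

lemma adjoin_inter_multiples:
  assumes fin: "finite (UNIV :: 'a::ab_group_add set)"
    and K: "add_submonoid K" "K \<inter> multiples g = {0}"
    and h: "(h::'a) \<notin> adjoin K g" and q: "prime q" "gmul q h \<in> K"
  shows "adjoin K h \<inter> multiples g = {0}"
proof -
  have S: "add_submonoid (adjoin K g)" using K(1) by (rule add_submonoid_adjoin)
  have K0: "0 \<in> K" using K(1) by (simp add: add_submonoid_def)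
  have "x = 0" if x: "x \<in> adjoin K h" "x \<in> multiples g" for x
  proof -
    obtain j k where jk: "x = gmul j h + k" "k \<in> K" using x(1) unfolding adjoin_def by blast
    show "x = 0"
    proof (cases "q dvd j")
      case True
      then obtain j' where "j = q * j'" by blast
      then have "gmul j h = gmul j' (gmul q h)" by (simp add: mult.commute[of q] gmul_mult)
      then have "x \<in> K" using jk K(1) add_submonoid_gmul[OF K(1) q(2)]
        by (simp add: add_submonoid_def)
      then show ?thesis using K(2) x(2) by blast
    next
      case False
      then have "coprime j q"
        using coprime_commute prime_imp_coprime_nat[OF q(1)] by blast
      moreover have "j \<noteq> 0" using False by (intro notI) simp
      then obtain u v where uv: "j * u = q * v + gcd j q" using bezout_nat by blast
      ultimately have "gmul (j * u) h = gmul v (gmul q h) + h"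
        by (simp add: gmul_add gmul_mult gmul_commute[of q v])
      moreover have "gmul (j * u) h = gmul u x - gmul u k"
        using jk by (simp add: gmul_plus_distrib mult.commute[of j] gmul_mult)
      ultimately have h_eq: "gmul u x - gmul u k - gmul v (gmul q h) = h" by (simp add: algebra_simps)
      have xS: "x \<in> adjoin K g"
        using x(2) multiples_subset[OF S mem_adjoin_gmul[OF K0, of 1 g]] by auto
      have kS: "k \<in> adjoin K g" and qhS: "gmul q h \<in> adjoin K g"
        using jk(2) q(2) subset_adjoin[of K g] by auto
      have "gmul u x - gmul u k - gmul v (gmul q h) \<in> adjoin K g"
        by (intro add_submonoid_diff[OF fin S] add_submonoid_gmul[OF S xS]
            add_submonoid_gmul[OF S kS] add_submonoid_gmul[OF S qhS])
      then have "h \<in> adjoin K g" unfolding h_eq .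
      then show ?thesis using h by blast
    qed
  qed
  moreover have "0 \<in> adjoin K h" using K0 subset_adjoin by blast
  ultimately show ?thesis
    using zero_mem_multiples[of g] by (intro equalityI subsetI) auto
qed

lemma ex_complement_multiples:
  assumes fin: "finite (UNIV :: 'a::ab_group_add set)" and H: "add_submonoid H"
    and g: "(g::'a) \<in> H" and max: "\<And>x. x \<in> H \<Longrightarrow> elem_ord x \<le> elem_ord g"
  shows "\<exists>K. add_submonoid K \<and> K \<subseteq> H \<and> K \<inter> multiples g = {0} \<and> adjoin K g = H"
proof -
  define Fam where "Fam = {K. add_submonoid K \<and> K \<subseteq> H \<and> K \<inter> multiples g = {0}}"
  have "finite (UNIV :: 'a set set)" using fin by (simp only: Finite_Set.finite_set)
  then have fin_Fam: "finite Fam" by (rule finite_subset[OF subset_UNIV])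
  have "add_submonoid {0}" "{0} \<subseteq> H" using H by (simp_all add: add_submonoid_def)
  moreover have "{0} \<inter> multiples g = {0}" using zero_mem_multiples[of g] by blast
  ultimately have "{0} \<in> Fam" unfolding Fam_def by blast
  then obtain K where "K \<in> Fam" and K_max: "\<forall>K'\<in>Fam. card K' \<le> card K"
    using finite_ex_max_nat[OF fin_Fam] by blast
  then have K: "add_submonoid K" "K \<subseteq> H" "K \<inter> multiples g = {0}" unfolding Fam_def by simp_all
  have "H \<subseteq> adjoin K g"
  proof
    fix x assume "x \<in> H"
    show "x \<in> adjoin K g"
    proof (rule ccontr)
      assume "x \<notin> adjoin K g"
      then obtain j q where jq: "prime q" "gmul j x \<notin> adjoin K g" "gmul q (gmul j x) \<in> adjoin K g"
        using ex_prime_multiple_mem[OF fin add_submonoid_adjoin[OF K(1)]] by blast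
      obtain h where h: "h \<in> H" "h \<notin> adjoin K g" "gmul q h \<in> K"
        using ex_prime_multiple_mem_complement[OF fin H g max K(1,3) add_submonoid_gmul[OF H \<open>x \<in> H\<close>] jq(2)
          jq(1,3)] by blast
      have "adjoin K h \<in> Fam"
        unfolding Fam_def
        using add_submonoid_adjoin[OF K(1)] adjoin_subset[OF H K(2) h(1)]
          adjoin_inter_multiples[OF fin K(1,3) h(2) jq(1) h(3)] by simp
      then have "card (adjoin K h) \<le> card K" using K_max by blast
      moreover have "K \<subset> adjoin K h"
      proof -
        have "h \<in> adjoin K h" using mem_adjoin_gmul[of K 1 h] K(1) by (simp add: add_submonoid_def)
        moreover have "h \<notin> K" using h(2) subset_adjoin[of K g] by blast
        ultimately show ?thesis using subset_adjoin[of K h] by blast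
      qed
      then have "card K < card (adjoin K h)"
        using psubset_card_mono finite_subset[OF subset_UNIV fin] by blast
      ultimately show False by simp
    qed
  qed
  then have "adjoin K g = H" using adjoin_subset[OF H K(2) g] by blast
  then show ?thesis using K by blast
qed

definition cyclic_decomposition :: "'a::ab_group_add set \<Rightarrow> nat \<Rightarrow> (nat \<Rightarrow> 'a) \<Rightarrow> bool" where
  "cyclic_decomposition H k g \<longleftrightarrow> (\<forall>i<k. g i \<in> H \<and> g i \<noteq> 0)
     \<and> (\<forall>x. (\<forall>i<k. x i \<in> multiples (g i)) \<longrightarrow> (\<Sum>i<k. x i) = 0 \<longrightarrow> (\<forall>i<k. x i = 0))
     \<and> (\<forall>y\<in>H. \<exists>x. (\<forall>i<k. x i \<in> multiples (g i)) \<and> y = (\<Sum>i<k. x i))"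

lemma cyclic_decomposition_adjoin:
  assumes fin: "finite (UNIV :: 'a::ab_group_add set)"
    and dec: "cyclic_decomposition K k h" and K: "add_submonoid K" "K \<inter> multiples g = {0}"
    and g0: "(g::'a) \<noteq> 0"
  shows "cyclic_decomposition (adjoin K g) (Suc k) (h(k := g))"
proof -
  have K0: "0 \<in> K" using K(1) by (simp add: add_submonoid_def)
  have gens: "\<forall>i<k. h i \<in> K \<and> h i \<noteq> 0"
    and indep: "\<And>x. \<forall>i<k. x i \<in> multiples (h i) \<Longrightarrow> (\<Sum>i<k. x i) = 0 \<Longrightarrow> \<forall>i<k. x i = 0"
    and span: "\<And>y. y \<in> K \<Longrightarrow> \<exists>x. (\<forall>i<k. x i \<in> multiples (h i)) \<and> y = (\<Sum>i<k. x i)"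
    using dec unfolding cyclic_decomposition_def by blast+
  have "\<forall>i<Suc k. (h(k := g)) i \<in> adjoin K g \<and> (h(k := g)) i \<noteq> 0"
    using gens g0 subset_adjoin[of K g] mem_adjoin_gmul[OF K0, of 1 g] by (auto simp: less_Suc_eq)
  moreover have "\<forall>i<Suc k. x i = 0"
    if x: "\<forall>i<Suc k. x i \<in> multiples ((h(k := g)) i)" and sum: "(\<Sum>i<Suc k. x i) = 0" for x
  proof -
    have xh: "\<forall>i<k. x i \<in> multiples (h i)"
    proof (intro allI impI)
      fix i assume "i < k"
      then show "x i \<in> multiples (h i)" using x[rule_format, of i] by simp
    qed
    have "(\<Sum>i<k. x i) \<in> K"
      using xh gens multiples_subset[OF K(1)] by (intro add_submonoid_sum[OF K(1)]) auto
    moreover have "x k = - (\<Sum>i<k. x i)"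
      using sum by (simp add: eq_neg_iff_add_eq_0 add.commute)
    ultimately have "x k \<in> K" using add_submonoid_uminus[OF fin K(1)] by simp
    moreover have "x k \<in> multiples g" using x[rule_format, of k] by simp
    ultimately have "x k = 0" using K(2) by blast
    then have "\<forall>i<k. x i = 0" using indep[OF xh] sum by simp
    then show ?thesis using \<open>x k = 0\<close> by (simp add: less_Suc_eq)
  qed
  moreover have "\<exists>x. (\<forall>i<Suc k. x i \<in> multiples ((h(k := g)) i)) \<and> y = (\<Sum>i<Suc k. x i)"
    if y_mem: "y \<in> adjoin K g" for y
  proof -
    obtain c z where y: "y = gmul c g + z" "z \<in> K" using y_mem unfolding adjoin_def by blast
    obtain x where x: "\<forall>i<k. x i \<in> multiples (h i)" "z = (\<Sum>i<k. x i)" using span[OF y(2)] by blast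
    have "\<forall>i<Suc k. (x(k := gmul c g)) i \<in> multiples ((h(k := g)) i)"
      using x(1) by (auto simp: less_Suc_eq)
    moreover have "y = (\<Sum>i<Suc k. (x(k := gmul c g)) i)"
      using x(2) y(1) by (simp add: add.commute)
    ultimately show ?thesis by blast
  qed
  ultimately show ?thesis unfolding cyclic_decomposition_def by blast
qed

lemma ex_cyclic_decomposition:
  assumes fin: "finite (UNIV :: 'a::ab_group_add set)"
  shows "add_submonoid (H::'a set) \<Longrightarrow> \<exists>k g. cyclic_decomposition H k g"
proof (induction "card H" arbitrary: H rule: less_induct)
  case less
  show ?case
  proof (cases "H = {0}")
    case True
    then have "cyclic_decomposition H 0 g" for g unfolding cyclic_decomposition_def by simp
    then show ?thesis by blast
  next
    case False
    have "finite H" using fin by (rule finite_subset[OF subset_UNIV])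
    have "0 \<in> H" using less.prems by (simp add: add_submonoid_def)
    obtain g where g: "g \<in> H" and max: "\<forall>x\<in>H. elem_ord x \<le> elem_ord g"
      using finite_ex_max_nat[OF \<open>finite H\<close> \<open>0 \<in> H\<close>, of elem_ord] by blast
    have "g \<noteq> 0"
    proof
      assume "g = 0"
      then have "elem_ord x = 1" if "x \<in> H" for x
        using max that elem_ord_eq_1_iff[of g] elem_ord_pos[OF ex_gmul_eq_zero_finite[OF fin], of x]
        by force
      then have "\<forall>x\<in>H. x = 0" using elem_ord_eq_1_iff by blast
      then show False using False \<open>0 \<in> H\<close> by blast
    qed
    obtain K where K: "add_submonoid K" "K \<subseteq> H" "K \<inter> multiples g = {0}" "adjoin K g = H"
      using ex_complement_multiples[OF fin less.prems g] max by blast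
    have "g \<notin> K" using K(3) \<open>g \<noteq> 0\<close> mem_multiples_self[of g] by blast
    then have "card K < card H"
      using K(2) g \<open>finite H\<close> by (intro psubset_card_mono) auto
    then obtain k h where "cyclic_decomposition K k h" using less.hyps K(1) by blast
    then have "cyclic_decomposition (adjoin K g) (Suc k) (h(k := g))"
      using cyclic_decomposition_adjoin[OF fin _ K(1,3) \<open>g \<noteq> 0\<close>] by blast
    then show ?thesis using K(4) by blast
  qed
qed

lemma direct_sum_cyclic_if_cyclic_decomposition:
  assumes fin: "finite (UNIV :: 'a::ab_group_add set)"
    and dec: "cyclic_decomposition (UNIV :: 'a set) k g"
  shows "direct_sum_cyclic TYPE('a) k"
proof -
  have indep: "\<And>x. \<forall>i<k. x i \<in> multiples (g i) \<Longrightarrow> (\<Sum>i<k. x i) = 0 \<Longrightarrow> \<forall>i<k. x i = 0"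
    and span: "\<And>y. \<exists>x. (\<forall>i<k. x i \<in> multiples (g i)) \<and> y = (\<Sum>i<k. x i)"
    using dec unfolding cyclic_decomposition_def by blast+
  have "inj_on (\<lambda>x. \<Sum>i<k. x i) (PiE {..<k} (\<lambda>i. multiples (g i)))"
  proof (rule inj_onI)
    fix x y assume x: "x \<in> PiE {..<k} (\<lambda>i. multiples (g i))" and y: "y \<in> PiE {..<k} (\<lambda>i. multiples (g i))"
      and eq: "(\<Sum>i<k. x i) = (\<Sum>i<k. y i)"
    have "\<forall>i<k. x i - y i \<in> multiples (g i)"
      using x y add_submonoid_diff[OF fin add_submonoid_multiples] by (auto simp: PiE_iff)
    moreover have "(\<Sum>i<k. x i - y i) = 0" using eq by (simp add: sum_subtractf)
    ultimately have "\<forall>i<k. x i - y i = 0" by (rule indep)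
    then show "x = y" using x y by (intro PiE_ext) auto
  qed
  moreover have "y \<in> (\<lambda>x. \<Sum>i<k. x i) ` PiE {..<k} (\<lambda>i. multiples (g i))" for y
  proof -
    obtain x where x: "\<forall>i<k. x i \<in> multiples (g i)" "y = (\<Sum>i<k. x i)" using span by blast
    then have "restrict x {..<k} \<in> PiE {..<k} (\<lambda>i. multiples (g i))" "y = (\<Sum>i<k. restrict x {..<k} i)"
      by auto
    then show ?thesis by blast
  qed
  ultimately show ?thesis
    unfolding direct_sum_cyclic_def cyc_eq_multiples[OF fin] bij_betw_def by blast
qed

lemma subset_sum_inj_if_cyclic_decomposition:
  assumes fin: "finite (UNIV :: 'a::ab_group_add set)"
    and dec: "cyclic_decomposition (UNIV :: 'a set) k g"
  shows "inj_on (\<lambda>S. \<Sum>i\<in>S. g i) (Pow {..<k})"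
proof (rule inj_onI)
  have indep: "\<And>x. \<forall>i<k. x i \<in> multiples (g i) \<Longrightarrow> (\<Sum>i<k. x i) = 0 \<Longrightarrow> \<forall>i<k. x i = 0"
    and g0: "\<And>i. i < k \<Longrightarrow> g i \<noteq> 0"
    using dec unfolding cyclic_decomposition_def by blast+
  fix S T assume S: "S \<in> Pow {..<k}" and T: "T \<in> Pow {..<k}" and eq: "(\<Sum>i\<in>S. g i) = (\<Sum>i\<in>T. g i)"
  define x where "x i = (if i \<in> S then g i else 0) - (if i \<in> T then g i else 0)" for i
  have "\<forall>i<k. x i \<in> multiples (g i)"
    unfolding x_def using add_submonoid_diff[OF fin add_submonoid_multiples] by simp
  moreover have "(\<Sum>i<k. x i) = 0"
    using S T eq by (simp add: x_def sum_subtractf sum.If_cases Int_absorb1)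
  ultimately have "\<forall>i<k. x i = 0" by (rule indep)
  then have "i \<in> S \<longleftrightarrow> i \<in> T" for i
    using g0 S T unfolding x_def by (cases "i < k") (auto split: if_splits)
  then show "S = T" by blast
qed

lemma grp_rank_le:
  assumes "finite (UNIV :: 'a::ab_group_add set)" "cyclic_decomposition (UNIV :: 'a set) k g"
  shows "grp_rank TYPE('a) \<le> k"
  unfolding grp_rank_def
  by (rule Least_le) (rule direct_sum_cyclic_if_cyclic_decomposition[OF assms])

lemma ex_elem_ord_eq_grp_exp:
  assumes fin: "finite (UNIV :: 'a::ab_group_add set)"
  shows "\<exists>g::'a. elem_ord g = grp_exp TYPE('a)"
proof -
  note ex = ex_gmul_eq_zero_finite[OF fin]
  obtain g :: 'a where max: "\<forall>x::'a. elem_ord x \<le> elem_ord g"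
    using finite_ex_max_nat[OF fin UNIV_I, of elem_ord] by auto
  have "add_submonoid (UNIV :: 'a set)" by (simp add: add_submonoid_def)
  then have "gmul (elem_ord g) x = 0" for x :: 'a
    using elem_ord_dvd_max_elem_ord[OF fin _ _ _, of UNIV g x] max gmul_eq_zero_iff_elem_ord_dvd[OF ex]
    by simp
  then have "grp_exp TYPE('a) = elem_ord g"
    unfolding grp_exp_def using elem_ord_pos[OF ex] gmul_eq_zero_iff_elem_ord_dvd[OF ex]
    by (intro Least_equality) (auto intro: dvd_imp_le)
  then show ?thesis by metis
qed

lemma augmentation_eq_sum:
  fixes f :: "'a \<Rightarrow>\<^sub>0 'r::comm_ring_1"
  assumes "finite S" "Poly_Mapping.keys f \<subseteq> S"
  shows "augmentation f = (\<Sum>a\<in>S. Poly_Mapping.lookup f a)"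
  unfolding augmentation_def
  by (rule sum.mono_neutral_left[OF assms]) (auto simp: in_keys_iff)

lemma augmentation_add:
  "augmentation (f + g) = augmentation f + augmentation (g :: 'a \<Rightarrow>\<^sub>0 'r::comm_ring_1)"
proof -
  let ?S = "Poly_Mapping.keys f \<union> Poly_Mapping.keys g"
  have "augmentation (f + g) = (\<Sum>a\<in>?S. Poly_Mapping.lookup (f + g) a)"
    using keys_add[of f g] by (intro augmentation_eq_sum) auto
  also have "\<dots> = (\<Sum>a\<in>?S. Poly_Mapping.lookup f a) + (\<Sum>a\<in>?S. Poly_Mapping.lookup g a)"
    by (simp add: lookup_add sum.distrib)
  also have "\<dots> = augmentation f + augmentation g"
    by (simp add: augmentation_eq_sum[of ?S])
  finally show ?thesis .
qed

lemma augmentation_zero [simp]: "augmentation (0 :: 'a \<Rightarrow>\<^sub>0 'r::comm_ring_1) = 0"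
  by (simp add: augmentation_def)

lemma augmentation_single [simp]: "augmentation (Poly_Mapping.single a c :: 'a \<Rightarrow>\<^sub>0 'r::comm_ring_1) = c"
  by (subst augmentation_eq_sum[of "{a}"]) auto

lemma augmentation_diff:
  "augmentation (f - g) = augmentation f - augmentation (g :: 'a \<Rightarrow>\<^sub>0 'r::comm_ring_1)"
  using augmentation_add[of "f - g" g] by simp

lemma augmentation_sum: "augmentation (sum f A) = (\<Sum>x\<in>A. augmentation (f x :: 'a \<Rightarrow>\<^sub>0 'r::comm_ring_1))"
  by (induction A rule: infinite_finite_induct) (auto simp: augmentation_add)

lemma augmentation_of_nat [simp]:
  "augmentation (of_nat n :: 'a::ab_group_add \<Rightarrow>\<^sub>0 'r::comm_ring_1) = of_nat n"
  by (metis augmentation_single single_of_nat)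

lemma single_minus_one_mem_aug_ideal:
  "Poly_Mapping.single g 1 - 1 \<in> (aug_ideal :: ('a::ab_group_add \<Rightarrow>\<^sub>0 'r::comm_ring_1) set)"
  unfolding aug_ideal_def using augmentation_of_nat[of 1] by (simp add: augmentation_diff)

lemma prod_mem_ideal_pow:
  assumes "\<And>i. i < n \<Longrightarrow> f i \<in> I" "n > 0"
  shows "(\<Prod>i<n. f i) \<in> ideal_pow I n"
proof -
  have "(\<Prod>i<n. f i) = prod_list (map f [0..<n])"
    by (metis atLeast_upt distinct_upt prod.distinct_set_conv_list)
  then have "(\<Prod>i<n. f i) = sum_list (map prod_list [map f [0..<n]])" by simp
  moreover have "\<forall>xs\<in>set [map f [0..<n]]. length xs = n \<and> set xs \<subseteq> I" using assms(1) by auto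
  moreover have "ideal_pow I n =
      {sum_list (map prod_list xss) | xss. \<forall>xs\<in>set xss. length xs = n \<and> set xs \<subseteq> I}"
    using assms(2) by (simp add: ideal_pow_def)
  ultimately show ?thesis by blast
qed

lemma ideal_pow_neq_zero:
  assumes "\<And>i. i < n \<Longrightarrow> f i \<in> I" "(\<Prod>i<n. f i) \<noteq> (0::'b::comm_ring_1)"
  shows "ideal_pow I n \<noteq> {0}"
proof (cases "n = 0")
  case True
  have "(1::'b) \<in> ideal_pow I 0" by (simp add: ideal_pow_def)
  then show ?thesis using True by auto
next
  case False
  then show ?thesis using prod_mem_ideal_pow[of n f I] assms by auto
qed

lemma enat_le_nil_index:
  assumes "\<And>j. j < n \<Longrightarrow> ideal_pow I j \<noteq> {0::'b::comm_ring_1}"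
  shows "enat n \<le> nil_index I"
proof (cases "nilpotent_ideal I")
  case True
  then have "ideal_pow I (LEAST j. ideal_pow I j = {0}) = {0}"
    unfolding nilpotent_ideal_def by (rule LeastI_ex)
  then have "n \<le> (LEAST j. ideal_pow I j = {0})" using assms not_le by blast
  then show ?thesis using True by (simp add: nil_index_def)
qed (simp add: nil_index_def)

section \<open>Nonvanishing elements of the powers of the augmentation ideal\<close>

lemma lookup_mult_single:
  fixes f :: "'a::ab_group_add \<Rightarrow>\<^sub>0 'r::comm_ring_1"
  shows "Poly_Mapping.lookup (f * Poly_Mapping.single a 1) b = Poly_Mapping.lookup f (b - a)"
proof -
  have "Poly_Mapping.lookup (f * Poly_Mapping.single a 1) b
      = (\<Sum>l. Poly_Mapping.lookup f l * (\<Sum>q. Poly_Mapping.lookup (Poly_Mapping.single a 1) q when b = l + q))"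
    by (rule lookup_mult)
  also have "\<dots> = (\<Sum>l. Poly_Mapping.lookup f l * (1 when b = l + a))"
  proof (rule Sum_any.cong)
    fix l
    have "(\<Sum>q. Poly_Mapping.lookup (Poly_Mapping.single a (1::'r)) q when b = l + q)
        = (\<Sum>q. (1 when b = l + a) when q = a)"
      by (rule Sum_any.cong) (auto simp: lookup_single when_def)
    then show "Poly_Mapping.lookup f l * (\<Sum>q. Poly_Mapping.lookup (Poly_Mapping.single a 1) q when b = l + q)
        = Poly_Mapping.lookup f l * (1 when b = l + a)"
      by simp
  qed
  also have "\<dots> = (\<Sum>l. Poly_Mapping.lookup f (b - a) when l = b - a)"
    by (rule Sum_any.cong) (auto simp: when_def algebra_simps)
  finally show ?thesis by simp
qed

lemma lookup_mult_single_minus_one: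
  fixes f :: "'a::ab_group_add \<Rightarrow>\<^sub>0 'r::comm_ring_1"
  shows "Poly_Mapping.lookup (f * (Poly_Mapping.single g 1 - 1)) b
     = Poly_Mapping.lookup f (b - g) - Poly_Mapping.lookup f b"
  by (simp add: right_diff_distrib lookup_minus lookup_mult_single)

lemma lookup_prod_single_minus_one_neq_zero:
  fixes g :: "nat \<Rightarrow> 'a::ab_group_add"
  assumes "Poly_Mapping.lookup (\<Prod>i<n. Poly_Mapping.single (g i) (1::'r::comm_ring_1) - 1) b \<noteq> 0"
  shows "\<exists>S\<subseteq>{..<n}. b = (\<Sum>i\<in>S. g i)"
  using assms
proof (induction n arbitrary: b)
  case 0
  then show ?case by (auto simp: lookup_one)
next
  case (Suc n)
  let ?P = "\<Prod>i<n. Poly_Mapping.single (g i) (1::'r) - 1"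
  have "Poly_Mapping.lookup ?P (b - g n) \<noteq> 0 \<or> Poly_Mapping.lookup ?P b \<noteq> 0"
    using Suc.prems by (auto simp: lookup_mult_single_minus_one)
  then show ?case
  proof
    assume "Poly_Mapping.lookup ?P (b - g n) \<noteq> 0"
    then obtain S where S: "S \<subseteq> {..<n}" "b - g n = (\<Sum>i\<in>S. g i)" using Suc.IH by blast
    moreover have "n \<notin> S" "finite S" using S(1) finite_subset by auto
    ultimately have "b = (\<Sum>i\<in>insert n S. g i)" by (simp add: algebra_simps)
    moreover have "insert n S \<subseteq> {..<Suc n}" using S(1) by auto
    ultimately show ?case by blast
  next
    assume "Poly_Mapping.lookup ?P b \<noteq> 0"
    then obtain S where "S \<subseteq> {..<n}" "b = (\<Sum>i\<in>S. g i)" using Suc.IH by blast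
    then show ?case by (intro exI[of _ S]) auto
  qed
qed

lemma lookup_prod_single_minus_one_sum:
  fixes g :: "nat \<Rightarrow> 'a::ab_group_add"
  assumes "\<forall>S\<subseteq>{..<n}. (\<Sum>i\<in>S. g i) = (\<Sum>i<n. g i) \<longrightarrow> S = {..<n}"
  shows "Poly_Mapping.lookup (\<Prod>i<n. Poly_Mapping.single (g i) (1::'r::comm_ring_1) - 1) (\<Sum>i<n. g i) = 1"
  using assms
proof (induction n)
  case 0
  then show ?case by (simp add: lookup_one)
next
  case (Suc n)
  let ?P = "\<Prod>i<n. Poly_Mapping.single (g i) (1::'r) - 1"
  have "S = {..<n}" if S: "S \<subseteq> {..<n}" "(\<Sum>i\<in>S. g i) = (\<Sum>i<n. g i)" for S
  proof -
    have "n \<notin> S" "finite S" using S(1) finite_subset by auto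
    then have "(\<Sum>i\<in>insert n S. g i) = (\<Sum>i<Suc n. g i)" using S(2) by (simp add: add.commute)
    moreover have "insert n S \<subseteq> {..<Suc n}" using S(1) by auto
    ultimately have "insert n S = {..<Suc n}" using Suc.prems by blast
    then show ?thesis using S(1) by auto
  qed
  then have "Poly_Mapping.lookup ?P (\<Sum>i<n. g i) = 1" using Suc.IH by blast
  moreover have "Poly_Mapping.lookup ?P (\<Sum>i<Suc n. g i) = 0"
  proof (rule ccontr)
    assume "Poly_Mapping.lookup ?P (\<Sum>i<Suc n. g i) \<noteq> 0"
    then obtain S where S: "S \<subseteq> {..<n}" "(\<Sum>i<Suc n. g i) = (\<Sum>i\<in>S. g i)"
      using lookup_prod_single_minus_one_neq_zero by blast
    have "S \<subseteq> {..<Suc n}" using S(1) by auto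
    then have "S = {..<Suc n}" using Suc.prems S(2) by simp
    then show False using S(1) by auto
  qed
  ultimately show ?case by (simp add: lookup_mult_single_minus_one)
qed

lemma ideal_pow_aug_ideal_neq_zero:
  fixes g :: "nat \<Rightarrow> 'a::ab_group_add"
  assumes "\<forall>S\<subseteq>{..<n}. (\<Sum>i\<in>S. g i) = (\<Sum>i<n. g i) \<longrightarrow> S = {..<n}"
  shows "ideal_pow (aug_ideal :: ('a \<Rightarrow>\<^sub>0 'r::comm_ring_1) set) n \<noteq> {0}"
proof (rule ideal_pow_neq_zero)
  show "(\<Prod>i<n. Poly_Mapping.single (g i) (1::'r) - 1) \<noteq> 0"
    using lookup_prod_single_minus_one_sum[OF assms, where 'r='r] by auto
qed (rule single_minus_one_mem_aug_ideal)

lemma unique_subset_sum_if_inj: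
  fixes g :: "nat \<Rightarrow> 'a::comm_monoid_add"
  assumes "inj_on (\<lambda>S. \<Sum>i\<in>S. g i) (Pow {..<k})" "n \<le> k"
  shows "\<forall>S\<subseteq>{..<n}. (\<Sum>i\<in>S. g i) = (\<Sum>i<n. g i) \<longrightarrow> S = {..<n}"
proof (intro allI impI)
  fix S assume S: "S \<subseteq> {..<n}" "(\<Sum>i\<in>S. g i) = (\<Sum>i<n. g i)"
  then have "S \<in> Pow {..<k}" "{..<n} \<in> Pow {..<k}" using assms(2) by auto
  then show "S = {..<n}" using inj_onD[OF assms(1)] S(2) by simp
qed

lemma unique_subset_sum_const:
  assumes "inj_on (\<lambda>k. gmul k a) {..n}"
  shows "\<forall>S\<subseteq>{..<n}. (\<Sum>i\<in>S. a) = (\<Sum>i<n. a) \<longrightarrow> S = {..<n}"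
proof (intro allI impI)
  fix S assume S: "S \<subseteq> {..<n}" and eq: "(\<Sum>i\<in>S. a) = (\<Sum>i<n. a)"
  have "card S \<le> n" using card_mono[OF _ S] by simp
  then have "card S = n"
    using eq assms unfolding sum_constant_gmul inj_on_def by simp
  then show "S = {..<n}" using S by (intro card_subset_eq) auto
qed

lemma sum_multiples_mult_single:
  fixes a :: "'a::ab_group_add"
  assumes ex: "\<exists>k>0. gmul k a = 0" and d: "d \<in> multiples a"
  shows "(\<Sum>b\<in>multiples a. Poly_Mapping.single b (1::'r::comm_ring_1)) * Poly_Mapping.single d 1
       = (\<Sum>b\<in>multiples a. Poly_Mapping.single b 1)"
proof -
  have "(\<Sum>b\<in>multiples a. Poly_Mapping.single b (1::'r)) * Poly_Mapping.single d 1
      = (\<Sum>b\<in>multiples a. Poly_Mapping.single (b + d) 1)"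
    by (simp add: sum_distrib_right mult_single)
  also have "\<dots> = (\<Sum>b\<in>(\<lambda>b. b + d) ` multiples a. Poly_Mapping.single b 1)"
    by (rule sum.reindex[symmetric, unfolded o_def]) (simp add: inj_on_def)
  also have "(\<lambda>b. b + d) ` multiples a = multiples a"
  proof (rule endo_inj_surj)
    show "(\<lambda>b. b + d) ` multiples a \<subseteq> multiples a"
      using add_submonoid_multiples[of a] d unfolding add_submonoid_def by blast
  qed (auto simp: finite_multiples[OF ex] inj_on_def)
  finally show ?thesis .
qed

lemma lookup_single_zero_mult:
  "Poly_Mapping.lookup (Poly_Mapping.single 0 r * f) b = r * Poly_Mapping.lookup (f :: 'a::ab_group_add \<Rightarrow>\<^sub>0 'r::comm_ring_1) b"
  by (simp add: mult_map_scale_conv_mult[symmetric] Poly_Mapping.map.rep_eq when_def)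

lemma not_nilpotent_aug_ideal_if_finite_order:
  fixes a :: "'a::ab_group_add"
  assumes ex: "\<exists>k>0. gmul k a = 0" and "a \<noteq> 0"
    and nz: "\<And>n. (of_nat (elem_ord a) :: 'r::comm_ring_1) ^ n \<noteq> 0"
  shows "\<not> nilpotent_ideal (aug_ideal :: ('a \<Rightarrow>\<^sub>0 'r) set)"
proof -
  define c where "c = elem_ord a"
  define s :: "'a \<Rightarrow>\<^sub>0 'r" where "s = (\<Sum>b\<in>multiples a. Poly_Mapping.single b 1)"
  define x where "x = of_nat c - s"
  have "s * s = (\<Sum>d\<in>multiples a. s * Poly_Mapping.single d 1)"
    unfolding s_def by (rule sum_distrib_left)
  also have "\<dots> = (\<Sum>d\<in>multiples a. s)"
    unfolding s_def by (rule sum.cong[OF refl sum_multiples_mult_single[OF ex]])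
  also have "\<dots> = of_nat c * s" using card_multiples[OF ex] unfolding c_def by simp
  finally have ss: "s * s = of_nat c * s" .
  have xx: "x * x = of_nat c * x" unfolding x_def by (simp add: algebra_simps ss)
  have x_pow: "x ^ Suc n = of_nat c ^ n * x" for n
  proof (induction n)
    case (Suc n)
    have "x ^ Suc (Suc n) = of_nat c ^ n * (x * x)"
      using Suc by (metis mult.assoc power_Suc2)
    also have "\<dots> = of_nat c ^ Suc n * x"
      by (simp only: xx mult.assoc[symmetric] power_Suc2)
    finally show ?case .
  qed simp
  have "augmentation s = of_nat c"
    unfolding s_def augmentation_sum using card_multiples[OF ex] c_def by simp
  then have "x \<in> aug_ideal" unfolding x_def aug_ideal_def by (simp add: augmentation_diff)
  have "Poly_Mapping.lookup s a = 1"
    unfolding s_def lookup_sum using finite_multiples[OF ex]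
    by (simp add: lookup_single when_def sum.delta)
  then have "Poly_Mapping.lookup x a = - 1"
    unfolding x_def using \<open>a \<noteq> 0\<close> by (simp add: lookup_minus lookup_of_nat)
  moreover have "of_nat c ^ n = (Poly_Mapping.single 0 (of_nat c ^ n) :: 'a \<Rightarrow>\<^sub>0 'r)" for n
    by (metis of_nat_power single_of_nat)
  ultimately have "Poly_Mapping.lookup (x ^ Suc n) a = - (of_nat c ^ n)" for n
    unfolding x_pow by (simp add: lookup_single_zero_mult)
  then have "x ^ Suc n \<noteq> 0" for n
    using nz[of n] unfolding c_def by (metis lookup_zero neg_equal_0_iff_equal)
  then have "x ^ n \<noteq> 0" for n by (cases n) auto
  then have "ideal_pow (aug_ideal :: ('a \<Rightarrow>\<^sub>0 'r) set) n \<noteq> {0}" for n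
    using ideal_pow_neq_zero[of n "\<lambda>_. x"] \<open>x \<in> aug_ideal\<close> by simp
  then show ?thesis unfolding nilpotent_ideal_def by blast
qed

lemma not_nilpotent_aug_ideal_if_infinite_order:
  assumes "infinite_order (a::'a::ab_group_add)"
  shows "\<not> nilpotent_ideal (aug_ideal :: ('a \<Rightarrow>\<^sub>0 'r::comm_ring_1) set)"
proof -
  have "inj_on (\<lambda>k. gmul k a) {..n}" for n
    using infinite_order_gmul_inj[OF assms] by (rule inj_on_subset) simp
  then have "ideal_pow (aug_ideal :: ('a \<Rightarrow>\<^sub>0 'r) set) n \<noteq> {0}" for n
    using ideal_pow_aug_ideal_neq_zero[of n "\<lambda>_. a"] unique_subset_sum_const by blast
  then show ?thesis unfolding nilpotent_ideal_def by blast
qed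

lemma not_nilpotent_aug_ideal_int:
  assumes "(a::'a::ab_group_add) \<noteq> 0"
  shows "\<not> nilpotent_ideal (aug_ideal :: ('a \<Rightarrow>\<^sub>0 int) set)"
proof (cases "infinite_order a")
  case True
  then show ?thesis by (rule not_nilpotent_aug_ideal_if_infinite_order)
next
  case False
  then have ex: "\<exists>k>0. gmul k a = 0" unfolding infinite_order_def by blast
  show ?thesis
    by (rule not_nilpotent_aug_ideal_if_finite_order[OF ex assms]) (use elem_ord_pos[OF ex] in simp)
qed

lemma of_nat_power_mod_ring_neq_zero:
  assumes "prime p" "p dvd CARD('n::nontriv)" "\<not> p dvd m"
  shows "(of_nat m :: 'n mod_ring) ^ k \<noteq> 0"
proof
  assume "(of_nat m :: 'n mod_ring) ^ k = 0"
  then have "CARD('n) dvd m ^ k"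
    by (simp only: of_nat_power[symmetric] of_nat_eq_0_iff_char_dvd semiring_char_mod_ring)
  then have "p dvd m" using assms(1,2) dvd_trans prime_dvd_power by blast
  then show False using assms(3) by simp
qed

lemma nil_index_aug_ideal_mod_ring:
  assumes "2 \<le> elem_ord (a::'a::ab_group_add)" "prime p" "p dvd CARD('n::nontriv)"
    "\<not> p dvd elem_ord a"
  shows "nil_index (aug_ideal :: ('a \<Rightarrow>\<^sub>0 'n mod_ring) set) = \<infinity>"
proof -
  have ex: "\<exists>k>0. gmul k a = 0" using assms(1) unfolding elem_ord_def by (auto split: if_splits)
  have "a \<noteq> 0" using assms(1) elem_ord_eq_1_iff[of a] by auto
  then have "\<not> nilpotent_ideal (aug_ideal :: ('a \<Rightarrow>\<^sub>0 'n mod_ring) set)"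
    by (rule not_nilpotent_aug_ideal_if_finite_order[OF ex])
      (rule of_nat_power_mod_ring_neq_zero[OF assms(2-4)])
  then show ?thesis by (simp add: nil_index_def)
qed

lemma nil_index_aug_ideal_ge:
  assumes fin: "finite (UNIV :: 'a::ab_group_add set)"
  shows "enat (max (grp_exp TYPE('a)) (grp_rank TYPE('a)))
    \<le> nil_index (aug_ideal :: ('a \<Rightarrow>\<^sub>0 'r::comm_ring_1) set)"
proof -
  obtain g :: 'a where g: "elem_ord g = grp_exp TYPE('a)"
    using ex_elem_ord_eq_grp_exp[OF fin] by blast
  have "inj_on (\<lambda>k. gmul k g) {..j}" if "j < elem_ord g" for j
    using gmul_inj_on_below_elem_ord[OF ex_gmul_eq_zero_finite[OF fin]]
    by (rule inj_on_subset) (use that in auto)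
  then have exp_le: "enat (grp_exp TYPE('a)) \<le> nil_index (aug_ideal :: ('a \<Rightarrow>\<^sub>0 'r) set)"
    unfolding g[symmetric] using ideal_pow_aug_ideal_neq_zero[of _ "\<lambda>_. g"] unique_subset_sum_const
    by (intro enat_le_nil_index) blast
  have "add_submonoid (UNIV :: 'a set)" by (simp add: add_submonoid_def)
  then obtain k h where dec: "cyclic_decomposition (UNIV :: 'a set) k h"
    using ex_cyclic_decomposition[OF fin] by blast
  then have "enat k \<le> nil_index (aug_ideal :: ('a \<Rightarrow>\<^sub>0 'r) set)"
    by (intro enat_le_nil_index ideal_pow_aug_ideal_neq_zero[where 'r='r and g=h]
        unique_subset_sum_if_inj[OF subset_sum_inj_if_cyclic_decomposition[OF fin dec]]) simp
  then have "enat (grp_rank TYPE('a)) \<le> nil_index (aug_ideal :: ('a \<Rightarrow>\<^sub>0 'r) set)"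
    by (rule order_trans[rotated]) (simp add: grp_rank_le[OF fin dec])
  then show ?thesis using exp_le by (simp add: max_def)
qed

theorem lemma3:
  assumes nontrivial: "\<exists>a::'a::ab_group_add. a \<noteq> 0"
  shows
    "((\<exists>a::'a. infinite_order a) \<longrightarrow> \<not> nilpotent_ideal (aug_ideal :: ('a \<Rightarrow>\<^sub>0 'r::comm_ring_1) set))
     \<and> \<not> nilpotent_ideal (aug_ideal :: ('a \<Rightarrow>\<^sub>0 int) set)
     \<and> (\<forall>m N::nat. 2 \<le> m \<longrightarrow> 2 \<le> N \<longrightarrow> N = CARD('n::nontriv) \<longrightarrow>
          (\<exists>p::nat. prime p \<and> p dvd N \<and> \<not> p dvd m) \<longrightarrow> (\<exists>a::'a. elem_ord a = m) \<longrightarrow>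
          nil_index (aug_ideal :: ('a \<Rightarrow>\<^sub>0 'n mod_ring) set) = \<infinity>)
     \<and> (finite (UNIV :: 'a set) \<longrightarrow>
          nil_index (aug_ideal :: ('a \<Rightarrow>\<^sub>0 'r) set)
            \<ge> enat (max (grp_exp TYPE('a)) (grp_rank TYPE('a))))"
  using nontrivial not_nilpotent_aug_ideal_if_infinite_order not_nilpotent_aug_ideal_int
    nil_index_aug_ideal_mod_ring nil_index_aug_ideal_ge
  by blast

end
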